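(* If $\lambda,\mu\in\Xi$ are circuits in $\Lambda$ and $V_0\cap F_\lambda\cap F_\mu\neq\emptyset$, then $\lambda$ and $\mu$ are consistent, i.e. $\lambda_e\mu_e\ge0$ for all $e\in E$.
   Context: Let $\mathcal M$ be a regular matroid on a finite ground set $E$, represented by a totally unimodular matrix $M$; $\mathcal F=\ker M\subseteq\mathbb R^E$ with Euclidean inner product, $\Lambda=\ker M\cap\mathbb Z^E$, $V_0=\{x\in\mathcal F:\|x\|\le\|x-\mu\|\ \forall\mu\in\Lambda\}$. A nonzero flow is Eulerian if all coordinates lie in $\{-1,0,1\}$; a circuit in $\Lambda$ is an Eulerian flow whose support is a circuit (minimal dependent set of columns) of $\mathcal M$; $\Xi$ is the set of circuits in $\Lambda$. For $\gamma\in\Xi$, $F_\gamma=\{x\in\mathcal F:2\langle x,\gamma\rangle=\|\gamma\|^2\}$. *)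

theory Defs
  imports "HOL-Analysis.Analysis"
begin

text \<open>Ground set E is the finite index type 'e; rows of the representing matrix are
  indexed by the finite type 'r.  Vectors in R^E are elements of real^'e with the
  Euclidean inner product.\<close>

definition det_nat :: "nat \<Rightarrow> (nat \<Rightarrow> nat \<Rightarrow> real) \<Rightarrow> real" where
  "det_nat k A = (\<Sum>p | p permutes {..<k}. of_int (sign p) * (\<Prod>i<k. A i (p i)))"

definition totally_unimodular :: "real^'e^'r \<Rightarrow> bool" where
  "totally_unimodular M \<longleftrightarrow>
     (\<forall>k (f::nat \<Rightarrow> 'r) (g::nat \<Rightarrow> 'e). inj_on f {..<k} \<longrightarrow> inj_on g {..<k} \<longrightarrow>
        det_nat k (\<lambda>i j. M $ f i $ g j) \<in> {-1, 0, 1})"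

definition flows :: "real^'e^'r \<Rightarrow> (real^'e) set" where
  "flows M = {x. M *v x = 0}"

definition flow_lattice :: "real^'e^'r \<Rightarrow> (real^'e) set" where
  "flow_lattice M = {x \<in> flows M. \<forall>e. x $ e \<in> \<int>}"

definition voronoi0 :: "real^'e^'r \<Rightarrow> (real^'e) set" where
  "voronoi0 M = {x \<in> flows M. \<forall>\<mu>\<in>flow_lattice M. norm x \<le> norm (x - \<mu>)}"

definition dependent_cols :: "real^'e^'r \<Rightarrow> 'e set \<Rightarrow> bool" where
  "dependent_cols M S \<longleftrightarrow>
     (\<exists>c::'e \<Rightarrow> real. (\<exists>e\<in>S. c e \<noteq> 0) \<and> (\<forall>r. (\<Sum>e\<in>S. c e * M $ r $ e) = 0))"

definition matroid_circuit :: "real^'e^'r \<Rightarrow> 'e set \<Rightarrow> bool" where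
  "matroid_circuit M S \<longleftrightarrow> dependent_cols M S \<and> (\<forall>T. T \<subset> S \<longrightarrow> \<not> dependent_cols M T)"

definition support :: "real^'e \<Rightarrow> 'e set" where
  "support x = {e. x $ e \<noteq> 0}"

definition eulerian :: "real^'e^'r \<Rightarrow> real^'e \<Rightarrow> bool" where
  "eulerian M x \<longleftrightarrow> x \<in> flow_lattice M \<and> x \<noteq> 0 \<and> (\<forall>e. x $ e \<in> {-1, 0, 1})"

definition lattice_circuits :: "real^'e^'r \<Rightarrow> (real^'e) set" where
  "lattice_circuits M = {x. eulerian M x \<and> matroid_circuit M (support x)}"

definition facet_hyp :: "real^'e^'r \<Rightarrow> real^'e \<Rightarrow> (real^'e) set" where
  "facet_hyp M \<gamma> = {x \<in> flows M. 2 * (x \<bullet> \<gamma>) = (norm \<gamma>)\<^sup>2}"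

end

(*
  For x in the Voronoi cell V_0, comparing x with a lattice point gamma gives 2<x,gamma> <= |gamma|^2,
  and for a {-1,0,1}-flow |gamma|^2 is its l1-norm |gamma|_1.  Since M is totally unimodular, the
  elementary flows (those with circuit support) are multiples of {-1,0,1}-vectors by Cramer's rule,
  and every flow y is a nonnegative combination of elementary flows conformal to y, so
  2<x,y> <= |y|_1 for all flows y.  For x on both facets F_lambda and F_mu, the flow lambda + mu then
  satisfies |lambda|_1 + |mu|_1 = 2<x,lambda + mu> <= |lambda + mu|_1, which forces
  |lambda_e + mu_e| = |lambda_e| + |mu_e|, i.e. lambda_e mu_e >= 0, at every e.
*)

theory Submission
  imports Defs "Jordan_Normal_Form.Determinant"
begin

no_notation Matrix.vec_index (infixl \<open>$\<close> 100)
no_notation Matrix.scalar_prod (infix \<open>\<bullet>\<close> 70)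

section \<open>Totally unimodular matrices\<close>

lemma dependent_cols_iff_nonzero_flow:
  fixes M :: "real^'e^'r"
  shows "dependent_cols M D \<longleftrightarrow> (\<exists>w. M *v w = 0 \<and> w \<noteq> 0 \<and> support w \<subseteq> D)"
proof
  assume "dependent_cols M D"
  then obtain c where c: "\<exists>e\<in>D. c e \<noteq> 0" "\<And>r. (\<Sum>e\<in>D. c e * M $ r $ e) = 0"
    unfolding dependent_cols_def by blast
  define w :: "real^'e" where "w = (\<chi> e. if e \<in> D then c e else 0)"
  have "(M *v w) $ r = (\<Sum>e\<in>D. c e * M $ r $ e)" for r
    unfolding matrix_vector_mult_def w_def
    by (simp add: if_distrib mult.commute sum.If_cases)
  then have "M *v w = 0" using c(2) by (simp add: Finite_Cartesian_Product.vec_eq_iff)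
  moreover have "w \<noteq> 0" using c(1) by (auto simp: w_def Finite_Cartesian_Product.vec_eq_iff)
  moreover have "support w \<subseteq> D" by (auto simp: w_def support_def)
  ultimately show "\<exists>w. M *v w = 0 \<and> w \<noteq> 0 \<and> support w \<subseteq> D" by blast
next
  assume "\<exists>w. M *v w = 0 \<and> w \<noteq> 0 \<and> support w \<subseteq> D"
  then obtain w where w: "M *v w = 0" "w \<noteq> 0" "support w \<subseteq> D" by blast
  have "(\<Sum>e\<in>D. w $ e * M $ r $ e) = 0" for r
  proof -
    have "(\<Sum>e\<in>D. w $ e * M $ r $ e) = (\<Sum>e\<in>UNIV. w $ e * M $ r $ e)"
      using w(3) by (intro sum.mono_neutral_left) (auto simp: support_def)
    also have "\<dots> = (M *v w) $ r" by (simp add: matrix_vector_mult_def mult.commute)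
    also have "\<dots> = 0" using w(1) by simp
    finally show ?thesis .
  qed
  moreover have "\<exists>e\<in>D. w $ e \<noteq> 0"
    using w(2,3) by (auto simp: support_def Finite_Cartesian_Product.vec_eq_iff)
  ultimately show "dependent_cols M D" unfolding dependent_cols_def by blast
qed

lemma det_mat_eq_det_nat: "Determinant.det (Matrix.mat n n (\<lambda>(i, j). A i j)) = det_nat n A"
proof -
  have "Determinant.det (Matrix.mat n n (\<lambda>(i, j). A i j)) =
    (\<Sum>p | p permutes {0..<n}. of_int (sign p) * (\<Prod>i = 0..<n. Matrix.mat n n (\<lambda>(i, j). A i j) $$ (i, p i)))"
    by (rule det_def') auto
  also have "\<dots> = (\<Sum>p | p permutes {..<n}. of_int (sign p) * (\<Prod>i<n. A i (p i)))"
  proof (rule sum.cong)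
    fix p assume "p \<in> {p. p permutes {..<n}}"
    then have "p i < n" if "i < n" for i using that permutes_in_image by fastforce
    then show "of_int (sign p) * (\<Prod>i = 0..<n. Matrix.mat n n (\<lambda>(i, j). A i j) $$ (i, p i)) =
               of_int (sign p) * (\<Prod>i<n. A i (p i))"
      by (simp add: atLeast0LessThan)
  qed (simp add: atLeast0LessThan)
  finally show ?thesis unfolding det_nat_def .
qed

lemma totally_unimodular_det_submatrix:
  fixes M :: "real^'e^'r"
  assumes "totally_unimodular M" and "inj_on f {..<n}" and "inj_on g {..<n}"
  shows "Determinant.det (Matrix.mat n n (\<lambda>(i, j). M $ f i $ g j)) \<in> {-1, 0, 1}"
  using assms unfolding det_mat_eq_det_nat totally_unimodular_def by blast

definition row_on :: "real^'e^'r \<Rightarrow> 'e set \<Rightarrow> 'r \<Rightarrow> real^'e" where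
  "row_on M D r = (\<chi> e. if e \<in> D then M $ r $ e else 0)"

lemma span_range_row_on:
  fixes M :: "real^'e^'r"
  assumes "\<not> dependent_cols M D"
  shows "span (range (row_on M D)) = span ((\<lambda>e. axis e 1) ` D)"
proof -
  let ?S = "range (row_on M D)" and ?T = "(\<lambda>e. axis e (1::real)) ` D"
  have "row_on M D r = (\<Sum>e\<in>D. M $ r $ e *\<^sub>R axis e 1)" for r
    by (simp add: row_on_def Finite_Cartesian_Product.vec_eq_iff sum_component axis_def if_distrib
        sum.delta cong: if_cong)
  also have "\<dots> r \<in> span ?T" for r by (intro span_sum span_scale span_base) auto
  finally have "?S \<subseteq> span ?T" by auto
  then have ST: "span ?S \<subseteq> span ?T" by (simp add: span_minimal)
  have "span ?T \<subseteq> span ?S"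
  proof (rule ccontr)
    assume "\<not> ?thesis"
    with ST have "span ?S \<subset> span ?T" by auto
    then obtain x where x: "x \<noteq> 0" "x \<in> span ?T" "\<And>y. y \<in> span ?S \<Longrightarrow> x \<bullet> y = 0"
      using orthogonal_to_subspace_exists_gen unfolding real_inner_class.orthogonal_def by metis
    have "span ?T \<subseteq> {v. \<forall>e. e \<notin> D \<longrightarrow> v $ e = 0}"
      by (rule span_minimal) (auto simp: axis_def subspace_def)
    with x(2) have "support x \<subseteq> D" by (auto simp: support_def)
    moreover have "(M *v x) $ r = 0" for r
    proof -
      have "(M *v x) $ r = x \<bullet> row_on M D r"
        using \<open>support x \<subseteq> D\<close>
        by (auto simp: matrix_vector_mult_def inner_vec_def row_on_def support_def mult.commute
            intro!: sum.cong)
      then show ?thesis using x(3)[OF span_base] by simp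
    qed
    then have "M *v x = 0" by (simp add: Finite_Cartesian_Product.vec_eq_iff)
    ultimately show False using x(1) assms dependent_cols_iff_nonzero_flow by blast
  qed
  with ST show ?thesis by blast
qed

lemma dim_range_row_on:
  fixes M :: "real^'e^'r"
  assumes "\<not> dependent_cols M D"
  shows "dim (range (row_on M D)) = card D"
proof -
  have "independent ((\<lambda>e. axis e (1::real)) ` D)"
    by (rule independent_mono[OF independent_Basis]) (auto simp: Basis_vec_def)
  moreover have "card ((\<lambda>e. axis e (1::real)) ` D) = card D"
    by (simp add: card_image inj_on_def axis_eq_axis)
  ultimately show ?thesis
    using span_range_row_on[OF assms] by (metis dim_span indep_card_eq_dim_span)
qed

lemma independent_image_coefficients_zero:
  fixes h :: "'i \<Rightarrow> 'a::euclidean_space"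
  assumes "inj_on h I" and "independent (h ` I)" and "(\<Sum>i\<in>I. c i *\<^sub>R h i) = 0" and "i \<in> I"
  shows "c i = 0"
proof -
  have "\<forall>c'. (\<Sum>b\<in>h ` I. c' b *\<^sub>R b) = 0 \<longrightarrow> (\<forall>b\<in>h ` I. c' b = 0)"
    using assms(2) unfolding independent_explicit by blast
  moreover have "(\<Sum>b\<in>h ` I. c (inv_into I h b) *\<^sub>R b) = 0"
    using assms(3) by (subst sum.reindex_cong[OF assms(1) refl]) (simp_all add: assms(1))
  ultimately have "\<forall>b\<in>h ` I. c (inv_into I h b) = 0"
    by (blast dest: spec[of _ "\<lambda>b. c (inv_into I h b)"])
  then show ?thesis using assms(1,4) by force
qed

lemma det_submatrix_neq_0_if_rows_independent:
  fixes M :: "real^'e^'r"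
  assumes inj: "inj_on (row_on M D \<circ> f) {..<n}" and indep: "independent ((row_on M D \<circ> f) ` {..<n})"
    and g: "bij_betw g {..<n} D"
  shows "Determinant.det (Matrix.mat n n (\<lambda>(i, j). M $ f i $ g j)) \<noteq> 0"
proof
  define A where "A = Matrix.mat n n (\<lambda>(i, j). M $ f i $ g j)"
  assume "Determinant.det (Matrix.mat n n (\<lambda>(i, j). M $ f i $ g j)) = 0"
  then have "Determinant.det A = 0" by (simp add: A_def)
  moreover have "A \<in> carrier_mat n n" by (simp add: A_def)
  ultimately have "Determinant.det (transpose_mat A) = 0" by (simp add: det_transpose)
  then obtain v where v: "v \<in> carrier_vec n" "v \<noteq> 0\<^sub>v n" "transpose_mat A *\<^sub>v v = 0\<^sub>v n"
    using det_0_iff_vec_prod_zero_field[of "transpose_mat A" n] by (auto simp: A_def)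
  have col: "(\<Sum>i<n. vec_index v i * M $ f i $ g j) = 0" if "j < n" for j
  proof -
    have "vec_index (transpose_mat A *\<^sub>v v) j = 0" using v(3) that by simp
    then show ?thesis using that v(1) by (simp add: A_def scalar_prod_def atLeast0LessThan mult.commute)
  qed
  have "(\<Sum>i<n. vec_index v i *\<^sub>R (row_on M D \<circ> f) i) $ e = 0" for e
  proof (cases "e \<in> D")
    case True
    then obtain j where "j < n" "e = g j" using g unfolding bij_betw_def by auto
    then show ?thesis using col True by (simp add: sum_component row_on_def)
  qed (simp add: sum_component row_on_def)
  then have "vec_index v i = 0" if "i < n" for i
    using independent_image_coefficients_zero[OF inj indep] that
    by (simp add: Finite_Cartesian_Product.vec_eq_iff)
  then show False using v(1,2) by (auto intro: eq_vecI)
qed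

lemma exists_nonsingular_submatrix:
  fixes M :: "real^'e^'r"
  assumes "\<not> dependent_cols M D"
  obtains f g where "inj_on f {..<card D}" and "bij_betw g {..<card D} D"
    and "Determinant.det (Matrix.mat (card D) (card D) (\<lambda>(i, j). M $ f i $ g j)) \<noteq> 0"
proof -
  obtain B where B: "B \<subseteq> range (row_on M D)" "independent B" "card B = dim (range (row_on M D))"
    by (meson basis_exists)
  from B(1) obtain R where R: "inj_on (row_on M D) R" "B = row_on M D ` R"
    unfolding subset_image_inj by blast
  have "finite R" using finiteI_independent[OF B(2)] R finite_image_iff by blast
  moreover have "card R = card D"
    using B(3) card_image[OF R(1)] dim_range_row_on[OF assms] by (simp add: R(2))
  ultimately obtain f where f: "bij_betw f {..<card D} R"
    using ex_bij_betw_nat_finite[of R] by (auto simp: atLeast0LessThan)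
  obtain g where g: "bij_betw g {..<card D} D"
    using ex_bij_betw_nat_finite[of D] by (auto simp: atLeast0LessThan)
  have "inj_on (row_on M D \<circ> f) {..<card D}"
    using f R(1) by (simp add: bij_betw_def comp_inj_on)
  moreover have "(row_on M D \<circ> f) ` {..<card D} = B"
    using f R(2) unfolding bij_betw_def by (metis image_comp)
  then have "independent ((row_on M D \<circ> f) ` {..<card D})" using B(2) by simp
  ultimately have det: "Determinant.det (Matrix.mat (card D) (card D) (\<lambda>(i, j). M $ f i $ g j)) \<noteq> 0"
    by (rule det_submatrix_neq_0_if_rows_independent[OF _ _ g])
  have "inj_on f {..<card D}" using f bij_betw_imp_inj_on by blast
  then show ?thesis using g det by (rule that)
qed

lemma unimodular_flow_entries:
  fixes M :: "real^'e^'r" and y :: "real^'e"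
  assumes TU: "totally_unimodular M" and indep: "\<not> dependent_cols M (C - {e0})"
    and flow: "M *v y = 0" and supp: "support y \<subseteq> C" and y_e0: "y $ e0 = 1"
  shows "y $ e \<in> {-1, 0, 1}"
proof (cases "e \<in> C - {e0}")
  case False
  then show ?thesis using supp y_e0 by (cases "e = e0") (auto simp: support_def)
next
  case True
  define D where "D = C - {e0}"
  define n where "n = card D"
  obtain f g where f: "inj_on f {..<n}" and g: "bij_betw g {..<n} D"
    and det_ne: "Determinant.det (Matrix.mat n n (\<lambda>(i, j). M $ f i $ g j)) \<noteq> 0"
    by (rule exists_nonsingular_submatrix[OF indep, folded D_def n_def])
  define A where "A = Matrix.mat n n (\<lambda>(i, j). M $ f i $ g j)"
  have A: "A \<in> carrier_mat n n" by (simp add: A_def)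
  have g_inj: "inj_on g {..<n}" using g bij_betw_imp_inj_on by blast
  have det_A: "Determinant.det A \<in> {-1, 1}"
    using det_ne totally_unimodular_det_submatrix[OF TU f g_inj] by (auto simp: A_def)
  obtain k where k: "k < n" "e = g k" using g True unfolding bij_betw_def D_def by auto
  define x where "x = Matrix.vec n (\<lambda>j. - y $ g j)"
  have x: "x \<in> carrier_vec n" by (simp add: x_def)
  have row_sum: "M $ r $ e0 + (\<Sum>e\<in>D. M $ r $ e * y $ e) = 0" for r
  proof -
    have "e0 \<in> C" using supp y_e0 by (auto simp: support_def)
    have "0 = (\<Sum>e\<in>UNIV. M $ r $ e * y $ e)"
      using flow by (simp add: matrix_vector_mult_def Finite_Cartesian_Product.vec_eq_iff)
    also have "\<dots> = (\<Sum>e\<in>C. M $ r $ e * y $ e)"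
      using supp by (intro sum.mono_neutral_right) (auto simp: support_def)
    also have "\<dots> = M $ r $ e0 + (\<Sum>e\<in>D. M $ r $ e * y $ e)"
      using \<open>e0 \<in> C\<close> y_e0 by (simp add: D_def sum.remove)
    finally show ?thesis by simp
  qed
  \<comment> \<open>x solves A x = (column e0 of M on the rows f), so by Cramer's rule x_k = -y_e is a
    quotient of two minors of M.\<close>
  have Ax: "A *\<^sub>v x = Matrix.vec n (\<lambda>i. M $ f i $ e0)"
  proof (rule eq_vecI)
    fix i assume "i < dim_vec (Matrix.vec n (\<lambda>i. M $ f i $ e0))"
    then have i: "i < n" by simp
    have "vec_index (A *\<^sub>v x) i = - (\<Sum>j<n. M $ f i $ g j * y $ g j)"
      using i A x by (simp add: A_def x_def scalar_prod_def atLeast0LessThan sum_negf)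
    also have "\<dots> = - (\<Sum>e\<in>D. M $ f i $ e * y $ e)"
      using sum.reindex_bij_betw[OF g, of "\<lambda>e. M $ f i $ e * y $ e"] by simp
    also have "\<dots> = M $ f i $ e0" using row_sum[of "f i"] by simp
    finally show "vec_index (A *\<^sub>v x) i = vec_index (Matrix.vec n (\<lambda>i. M $ f i $ e0)) i"
      using i by simp
  qed (simp add: A_def)
  have inj: "inj_on (g(k := e0)) {..<n}"
    using g_inj g k(1) unfolding bij_betw_def D_def inj_on_def by auto
  have "replace_col A (A *\<^sub>v x) k = Matrix.mat n n (\<lambda>(i, j). M $ f i $ (g(k := e0)) j)"
    unfolding Ax by (rule eq_matI) (auto simp: replace_col_def A_def)
  then have "Determinant.det (replace_col A (A *\<^sub>v x) k) \<in> {-1, 0, 1}"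
    using totally_unimodular_det_submatrix[OF TU f inj] by simp
  then have "- y $ e * Determinant.det A \<in> {-1, 0, 1}"
    using cramer_lemma_mat[OF A x k(1)] k by (simp add: x_def)
  then show ?thesis using det_A by auto
qed

section \<open>Conformal decomposition of flows\<close>

definition conformal :: "real^'e \<Rightarrow> real^'e \<Rightarrow> bool" where
  "conformal z y \<longleftrightarrow> (\<forall>e. 0 \<le> z $ e * y $ e) \<and> support z \<subseteq> support y"

lemma conformal_trans:
  assumes "conformal z' z" and "conformal z y"
  shows "conformal z' y"
proof -
  have "0 \<le> z' $ e * y $ e" for e
  proof (cases "z $ e = 0")
    case True
    then have "z' $ e = 0" using assms(1) unfolding conformal_def support_def by blast
    then show ?thesis by simp
  next
    case False
    have "0 \<le> (z' $ e * z $ e) * (z $ e * y $ e)"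
      using assms by (simp add: conformal_def)
    then have "0 \<le> (z' $ e * y $ e) * (z $ e)\<^sup>2" by (simp add: algebra_simps power2_eq_square)
    then show ?thesis using False by (simp add: zero_le_mult_iff)
  qed
  then show ?thesis using assms by (auto simp: conformal_def)
qed

lemma conformal_scaleR: "0 < c \<Longrightarrow> conformal z y \<Longrightarrow> conformal (c *\<^sub>R z) y"
  by (auto simp: conformal_def support_def mult.assoc)

lemma conformal_reduction:
  fixes z w :: "real^'e"
  assumes "w \<noteq> 0" and "support w \<subseteq> support z"
  obtains t where "conformal (z - t *\<^sub>R w) z" and "support (z - t *\<^sub>R w) \<subset> support z"
proof -
  have reduce: "\<exists>t. conformal (z - t *\<^sub>R v) z \<and> support (z - t *\<^sub>R v) \<subset> support z"
    if v: "support v \<subseteq> support z" "v $ e1 \<noteq> 0" "0 < z $ e1 / v $ e1" for v e1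
  proof -
    define P where "P = {e. v $ e \<noteq> 0 \<and> 0 < z $ e / v $ e}"
    define t where "t = Min ((\<lambda>e. z $ e / v $ e) ` P)"
    have "finite P" "e1 \<in> P" using v by (auto simp: P_def)
    then have "t \<in> (\<lambda>e. z $ e / v $ e) ` P" unfolding t_def by (intro Min_in) auto
    then obtain em where em: "em \<in> P" "t = z $ em / v $ em" by auto
    have t_le: "t \<le> z $ e / v $ e" if "e \<in> P" for e
      using that \<open>finite P\<close> unfolding t_def by auto
    have same_sign: "0 \<le> (z - t *\<^sub>R v) $ e * z $ e" for e
    proof (cases "v $ e = 0")
      case False
      define r where "r = z $ e / v $ e"
      have prod: "(z - t *\<^sub>R v) $ e * z $ e = (r - t) * r * (v $ e)\<^sup>2"
        using False by (simp add: r_def field_simps power2_eq_square)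
      have "0 < t" using em by (simp add: P_def)
      moreover have "t \<le> r" if "0 < r" using t_le[of e] that False by (simp add: P_def r_def)
      ultimately have "0 \<le> (r - t) * r" by (cases "0 < r") (auto intro: mult_nonpos_nonpos)
      then show ?thesis using prod by simp
    qed (simp add: zero_le_square)
    have "support (z - t *\<^sub>R v) \<subseteq> support z" using v(1) by (auto simp: support_def)
    moreover have "em \<in> support z - support (z - t *\<^sub>R v)"
      using em by (auto simp: support_def P_def)
    ultimately show ?thesis using same_sign unfolding conformal_def by blast
  qed
  obtain e1 where e1: "w $ e1 \<noteq> 0" using assms(1) by (metis Finite_Cartesian_Product.vec_eq_iff zero_index)
  then have "z $ e1 \<noteq> 0" using assms(2) by (auto simp: support_def)
  show ?thesis
  proof (cases "0 < z $ e1 / w $ e1")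
    case True
    then show ?thesis using reduce[OF assms(2) e1] that by blast
  next
    case False
    then have "0 < z $ e1 / (- w) $ e1" using e1 \<open>z $ e1 \<noteq> 0\<close>
      by (simp add: divide_less_0_iff zero_less_divide_iff) linarith
    moreover have "support (- w) \<subseteq> support z" using assms(2) by (simp add: support_def)
    moreover have "(- w) $ e1 \<noteq> 0" using e1 by simp
    ultimately obtain t where "conformal (z - t *\<^sub>R (- w)) z" "support (z - t *\<^sub>R (- w)) \<subset> support z"
      using reduce by blast
    then show ?thesis using that[of "- t"] by simp
  qed
qed

lemma exists_conformal_unimodular_flow:
  fixes M :: "real^'e^'r" and y :: "real^'e"
  assumes TU: "totally_unimodular M" and "M *v y = 0" and "y \<noteq> 0"
  obtains \<gamma> where "M *v \<gamma> = 0" and "\<gamma> \<noteq> 0" and "\<forall>e. \<gamma> $ e \<in> {-1, 0, 1}" and "conformal \<gamma> y"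
proof -
  define K where "K = {z. M *v z = 0 \<and> z \<noteq> 0 \<and> conformal z y}"
  have "y \<in> K" using assms by (auto simp: K_def conformal_def)
  then obtain z where "z \<in> K" and min: "\<And>z'. z' \<in> K \<Longrightarrow> card (support z) \<le> card (support z')"
    using ex_has_least_nat[of "\<lambda>z. z \<in> K" y "\<lambda>z. card (support z)"] by blast
  then have z: "M *v z = 0" "z \<noteq> 0" "conformal z y" by (auto simp: K_def)
  then obtain e0 where e0: "z $ e0 \<noteq> 0" by (metis Finite_Cartesian_Product.vec_eq_iff zero_index)
  \<comment> \<open>A support-minimal conformal flow has the support of a circuit.\<close>
  have "\<not> dependent_cols M (support z - {e0})"
  proof
    assume "dependent_cols M (support z - {e0})"
    then obtain w where w: "M *v w = 0" "w \<noteq> 0" "support w \<subseteq> support z - {e0}"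
      by (auto simp: dependent_cols_iff_nonzero_flow)
    then obtain t where t: "conformal (z - t *\<^sub>R w) z" "support (z - t *\<^sub>R w) \<subset> support z"
      using conformal_reduction[of w z] by blast
    have "(z - t *\<^sub>R w) $ e0 \<noteq> 0" using w(3) e0 by (auto simp: support_def)
    then have "z - t *\<^sub>R w \<in> K"
      using z w(1) conformal_trans[OF t(1) z(3)]
      by (auto simp: K_def matrix_vector_mult_diff_distrib matrix_vector_mult_scaleR)
    then have "card (support z) \<le> card (support (z - t *\<^sub>R w))" by (rule min)
    moreover have "card (support (z - t *\<^sub>R w)) < card (support z)"
      using t(2) by (simp add: psubset_card_mono)
    ultimately show False by simp
  qed
  then have "((1 / z $ e0) *\<^sub>R z) $ e \<in> {-1, 0, 1}" for e
    using z(1) e0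
    by (intro unimodular_flow_entries[OF TU]) (auto simp: support_def matrix_vector_mult_scaleR)
  then have "((1 / \<bar>z $ e0\<bar>) *\<^sub>R z) $ e \<in> {-1, 0, 1}" for e
    using e0 by (cases "0 < z $ e0") (auto simp: abs_if)
  moreover have "conformal ((1 / \<bar>z $ e0\<bar>) *\<^sub>R z) y"
    using e0 z(3) by (simp add: conformal_scaleR)
  ultimately show ?thesis
    using that[of "(1 / \<bar>z $ e0\<bar>) *\<^sub>R z"] z(1,2) e0
    by (simp add: matrix_vector_mult_scaleR)
qed

lemma inner_le_sum_abs_of_flow:
  fixes M :: "real^'e^'r" and a y :: "real^'e"
  assumes TU: "totally_unimodular M"
    and unimodular: "\<And>\<gamma>. M *v \<gamma> = 0 \<Longrightarrow> \<forall>e. \<gamma> $ e \<in> {-1, 0, 1} \<Longrightarrow> a \<bullet> \<gamma> \<le> (\<Sum>e\<in>UNIV. \<bar>\<gamma> $ e\<bar>)"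
    and "M *v y = 0"
  shows "a \<bullet> y \<le> (\<Sum>e\<in>UNIV. \<bar>y $ e\<bar>)"
  using assms(3)
proof (induction "card (support y)" arbitrary: y rule: less_induct)
  case less
  show ?case
  proof (cases "y = 0")
    case False
    obtain \<gamma> where \<gamma>: "M *v \<gamma> = 0" "\<gamma> \<noteq> 0" "\<forall>e. \<gamma> $ e \<in> {-1, 0, 1}" "conformal \<gamma> y"
      using exists_conformal_unimodular_flow[OF TU less.prems False] by blast
    have "support \<gamma> \<noteq> {}"
      using \<gamma>(2) by (auto simp: support_def Finite_Cartesian_Product.vec_eq_iff)
    define s where "s = Min ((\<lambda>e. \<bar>y $ e\<bar>) ` support \<gamma>)"
    have "s \<in> (\<lambda>e. \<bar>y $ e\<bar>) ` support \<gamma>"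
      unfolding s_def using \<open>support \<gamma> \<noteq> {}\<close> by (intro Min_in) auto
    then obtain em where em: "em \<in> support \<gamma>" "s = \<bar>y $ em\<bar>" by blast
    have s_le: "s \<le> \<bar>y $ e\<bar>" if "e \<in> support \<gamma>" for e
      using that unfolding s_def by simp
    have "0 < s" using em \<gamma>(4) by (auto simp: conformal_def support_def)
    define y' where "y' = y - s *\<^sub>R \<gamma>"
    have abs_split: "\<bar>y $ e\<bar> = \<bar>y' $ e\<bar> + s * \<bar>\<gamma> $ e\<bar>" for e
    proof (cases "\<gamma> $ e = 0")
      case False
      then have "\<gamma> $ e = 1 \<or> \<gamma> $ e = -1" using \<gamma>(3) by auto
      moreover have "0 \<le> \<gamma> $ e * y $ e" using \<gamma>(4) by (simp add: conformal_def)
      moreover have "s \<le> \<bar>y $ e\<bar>" using False s_le by (simp add: support_def)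
      ultimately show ?thesis using \<open>0 < s\<close> by (auto simp: y'_def)
    qed (simp add: y'_def)
    have "support y' \<subseteq> support y"
      using \<gamma>(4) by (auto simp: y'_def conformal_def support_def)
    moreover have "em \<in> support y - support y'"
    proof -
      have "\<bar>\<gamma> $ em\<bar> = 1" using em(1) \<gamma>(3)[rule_format, of em] by (auto simp: support_def)
      then have "y' $ em = 0" using abs_split[of em] em(2) by simp
      then show ?thesis using \<open>0 < s\<close> em(2) by (simp add: support_def)
    qed
    ultimately have "card (support y') < card (support y)"
      by (intro psubset_card_mono) auto
    moreover have "M *v y' = 0"
      using less.prems \<gamma>(1) by (simp add: y'_def matrix_vector_mult_diff_distrib matrix_vector_mult_scaleR)
    ultimately have "a \<bullet> y' \<le> (\<Sum>e\<in>UNIV. \<bar>y' $ e\<bar>)" by (rule less.hyps)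
    moreover have "a \<bullet> \<gamma> \<le> (\<Sum>e\<in>UNIV. \<bar>\<gamma> $ e\<bar>)" using unimodular \<gamma>(1,3) by blast
    ultimately have "a \<bullet> y' + s * (a \<bullet> \<gamma>) \<le> (\<Sum>e\<in>UNIV. \<bar>y' $ e\<bar>) + s * (\<Sum>e\<in>UNIV. \<bar>\<gamma> $ e\<bar>)"
      using \<open>0 < s\<close> by (intro add_mono mult_left_mono) auto
    also have "\<dots> = (\<Sum>e\<in>UNIV. \<bar>y $ e\<bar>)"
      by (simp add: abs_split sum.distrib sum_distrib_left)
    finally show ?thesis by (simp add: y'_def inner_diff_right)
  qed simp
qed

section \<open>The Voronoi cell\<close>

lemma voronoi0_inner_le:
  assumes "x \<in> voronoi0 M" and "\<mu> \<in> flow_lattice M"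
  shows "2 * (x \<bullet> \<mu>) \<le> (norm \<mu>)\<^sup>2"
proof -
  have "norm x \<le> norm (x - \<mu>)" using assms unfolding voronoi0_def by blast
  then have "(norm x)\<^sup>2 \<le> (norm (x - \<mu>))\<^sup>2" by (simp add: power_mono)
  then show ?thesis by (simp add: power2_norm_eq_inner inner_diff_left inner_diff_right inner_commute)
qed

lemma norm_power2_eq_sum_abs:
  fixes g :: "real^'e"
  assumes "\<forall>e. g $ e \<in> {-1, 0, 1}"
  shows "(norm g)\<^sup>2 = (\<Sum>e\<in>UNIV. \<bar>g $ e\<bar>)"
proof -
  have "g $ e * g $ e = \<bar>g $ e\<bar>" for e using assms[rule_format, of e] by auto
  then show ?thesis by (simp add: power2_norm_eq_inner inner_vec_def)
qed

lemma voronoi0_inner_le_sum_abs: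
  fixes M :: "real^'e^'r"
  assumes TU: "totally_unimodular M" and "x \<in> voronoi0 M" and "M *v y = 0"
  shows "2 * (x \<bullet> y) \<le> (\<Sum>e\<in>UNIV. \<bar>y $ e\<bar>)"
proof -
  have "(2 *\<^sub>R x) \<bullet> \<gamma> \<le> (\<Sum>e\<in>UNIV. \<bar>\<gamma> $ e\<bar>)" if "M *v \<gamma> = 0" "\<forall>e. \<gamma> $ e \<in> {-1, 0, 1}" for \<gamma>
  proof -
    have "\<gamma> $ e \<in> \<int>" for e using that(2)[rule_format, of e] by auto
    then have "\<gamma> \<in> flow_lattice M" using that(1) by (simp add: flow_lattice_def flows_def)
    from voronoi0_inner_le[OF assms(2) this] show ?thesis
      using norm_power2_eq_sum_abs[OF that(2)] by simp
  qed
  from inner_le_sum_abs_of_flow[OF TU this assms(3)] show ?thesis by simp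
qed

lemma mult_nonneg_if_sum_abs_add_ge:
  fixes a b :: "real^'e"
  assumes "(\<Sum>e\<in>UNIV. \<bar>a $ e\<bar>) + (\<Sum>e\<in>UNIV. \<bar>b $ e\<bar>) \<le> (\<Sum>e\<in>UNIV. \<bar>a $ e + b $ e\<bar>)"
  shows "0 \<le> a $ e * b $ e"
proof -
  have "(\<Sum>e\<in>UNIV. \<bar>a $ e\<bar> + \<bar>b $ e\<bar> - \<bar>a $ e + b $ e\<bar>) = 0"
    using assms by (intro antisym sum_nonneg) (auto simp: sum.distrib sum_subtractf abs_triangle_ineq)
  then have "\<bar>a $ e + b $ e\<bar> = \<bar>a $ e\<bar> + \<bar>b $ e\<bar>"
    by (subst (asm) sum_nonneg_eq_0_iff) (auto simp: abs_triangle_ineq)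
  then show ?thesis by (auto simp: abs_if zero_le_mult_iff split: if_splits)
qed

theorem mainTheorem12:
  fixes M :: "real^'e^'r" and lam mu :: "real^'e"
  assumes "totally_unimodular M"
    and "lam \<in> lattice_circuits M" and "mu \<in> lattice_circuits M"
    and "voronoi0 M \<inter> facet_hyp M lam \<inter> facet_hyp M mu \<noteq> {}"
  shows "\<forall>e. lam $ e * mu $ e \<ge> 0"
proof
  fix e
  obtain x where x: "x \<in> voronoi0 M" "x \<in> facet_hyp M lam" "x \<in> facet_hyp M mu"
    using assms(4) by blast
  have lam: "M *v lam = 0" "\<forall>e. lam $ e \<in> {-1, 0, 1}"
    and mu: "M *v mu = 0" "\<forall>e. mu $ e \<in> {-1, 0, 1}"
    using assms(2,3) by (auto simp: lattice_circuits_def eulerian_def flow_lattice_def flows_def)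
  have "2 * (x \<bullet> lam) = (\<Sum>e\<in>UNIV. \<bar>lam $ e\<bar>)" and "2 * (x \<bullet> mu) = (\<Sum>e\<in>UNIV. \<bar>mu $ e\<bar>)"
    using x(2,3) norm_power2_eq_sum_abs[OF lam(2)] norm_power2_eq_sum_abs[OF mu(2)]
    by (auto simp: facet_hyp_def)
  moreover have "M *v (lam + mu) = 0" using lam(1) mu(1) by (simp add: matrix_vector_right_distrib)
  then have "2 * (x \<bullet> (lam + mu)) \<le> (\<Sum>e\<in>UNIV. \<bar>(lam + mu) $ e\<bar>)"
    by (rule voronoi0_inner_le_sum_abs[OF assms(1) x(1)])
  ultimately show "lam $ e * mu $ e \<ge> 0"
    by (intro mult_nonneg_if_sum_abs_add_ge) (simp add: inner_add_right)
qed

end
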